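(* Let $P=(I,J,\emptyset)$ be a reduced presentation. Then for every $j\in J$, $\mathbf{\L}_{j,1}$ is embeddable in $\mathbf B_\Delta$.
   Context: Wajsberg hoops: basic hoops satisfying $(x\to y)\to y\approx(y\to x)\to x$. $\Gamma(\mathbf G,u)$ is the Wajsberg hoop on $[0,u]$ with $ab=\max\{a+b-u,0\}$, $a\to b=\min\{u-a+b,u\}$; $\mathbf{\L}_n=\Gamma(\mathbb Z,n)$ (elements $0,\dots,n$), $\mathbf{\L}_{n,k}=\Gamma(\mathbb Z\times_l\mathbb Z,(n,k))$ (pairs $(r,s)$, lexicographic order), $\mathbf{\L}_n^\infty=\mathbf{\L}_{n,0}$. In a bounded Wajsberg hoop, $\neg a=a\to0$. $X{\downarrow}$ = set of divisors of elements of $X$. A presentation $(I,J,\emptyset)$ ($I,J$ finite subsets of $\mathbb N\setminus\{0\}$) is reduced if $I\cup J\ne\emptyset$, no $m\in I$ divides any element of $(I\setminus\{m\})\cup J$, and no $n\in J$ divides any element of $J\setminus\{n\}$. Generators: for $k\ge2$, $0\le h<k$, $\gcd(k,h)=1$, $g_{k,h}$ is the unique element $a\in\mathbf{\L}_{k,h}$ with $a\le\neg a$ generating $\mathbf{\L}_{k,h}$; $g_{1,0}=(0,1)\in\mathbf{\L}_{1,0}$. Construction: $\Delta=\{(k,h,2):0\le h<k\in I{\downarrow},\gcd(k,h)=1\}\cup\{(k,h,i):i\in\{0,1\},0\le h<k\in J{\downarrow},\gcd(k,h)=1\}$; $\mathbf A^0_{k,h}=\mathbf A^1_{k,h}=\mathbf{\L}_{k,h}$,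 $\mathbf A^2_{k,h}=\mathbf{\L}_k$; $\mathbf A_\Delta=\prod_{(k,h,i)\in\Delta}\mathbf A^i_{k,h}$; $\bar g(k,h,0)=g_{k,h}$, $\bar g(k,h,1)=\neg g_{k,h}$, $\bar g(k,h,2)=h\in\mathbf{\L}_k$; $\mathbf B_\Delta$ is the subalgebra of $\mathbf A_\Delta$ generated by $\bar g$. *)

theory Defs
  imports Main "HOL-Library.Product_Lexorder" "HOL-Library.Product_Plus"
begin

text \<open>Elements of the lexicographically ordered group Z x_l Z are pairs of integers;
  the order on pairs is the lexicographic one (Product_Lexorder), addition is
  componentwise (Product_Plus).  The group Z is represented inside Z x_l Z as
  the pairs (r,0) (an ordered-group embedding), so Gamma(Z,n) is realised on
  the pairs (r,0), 0 <= r <= n, with unit (n,0).\<close>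

type_synonym elt = "int \<times> int"

record 'a halg =
  hcarrier :: "'a set"
  hmult :: "'a \<Rightarrow> 'a \<Rightarrow> 'a"
  himp :: "'a \<Rightarrow> 'a \<Rightarrow> 'a"
  hone :: 'a

definition gmult :: "elt \<Rightarrow> elt \<Rightarrow> elt \<Rightarrow> elt" where
  "gmult u a b = max (a + b - u) 0"

definition gimp :: "elt \<Rightarrow> elt \<Rightarrow> elt \<Rightarrow> elt" where
  "gimp u a b = min (u - a + b) u"

definition Luk_pair :: "nat \<Rightarrow> nat \<Rightarrow> elt halg" where
  "Luk_pair n k = \<lparr> hcarrier = {a. 0 \<le> a \<and> a \<le> (int n, int k)},
      hmult = gmult (int n, int k), himp = gimp (int n, int k), hone = (int n, int k) \<rparr>"

definition Luk :: "nat \<Rightarrow> elt halg" where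
  "Luk n = \<lparr> hcarrier = {(int r, 0) | r. r \<le> n},
      hmult = gmult (int n, 0), himp = gimp (int n, 0), hone = (int n, 0) \<rparr>"

inductive_set gen :: "'a halg \<Rightarrow> 'a set \<Rightarrow> 'a set" for A :: "'a halg" and X :: "'a set" where
  gen_base: "x \<in> X \<Longrightarrow> x \<in> gen A X"
| gen_one: "hone A \<in> gen A X"
| gen_mult: "a \<in> gen A X \<Longrightarrow> b \<in> gen A X \<Longrightarrow> hmult A a b \<in> gen A X"
| gen_imp: "a \<in> gen A X \<Longrightarrow> b \<in> gen A X \<Longrightarrow> himp A a b \<in> gen A X"

definition lneg :: "nat \<Rightarrow> nat \<Rightarrow> elt \<Rightarrow> elt" where
  "lneg k h a = himp (Luk_pair k h) a 0"

definition gen_el :: "nat \<Rightarrow> nat \<Rightarrow> elt" where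
  "gen_el k h = (if k = 1 then (0, 1) else
     (THE a. a \<in> hcarrier (Luk_pair k h) \<and> a \<le> lneg k h a
             \<and> gen (Luk_pair k h) {a} = hcarrier (Luk_pair k h)))"

definition divisors_of :: "nat set \<Rightarrow> nat set" where
  "divisors_of X = {k. \<exists>m\<in>X. k dvd m}"

definition reduced :: "nat set \<Rightarrow> nat set \<Rightarrow> bool" where
  "reduced I J \<longleftrightarrow> I \<union> J \<noteq> {}
     \<and> (\<forall>m\<in>I. \<forall>x\<in>(I - {m}) \<union> J. \<not> m dvd x)
     \<and> (\<forall>n\<in>J. \<forall>x\<in>J - {n}. \<not> n dvd x)"

definition Delta :: "nat set \<Rightarrow> nat set \<Rightarrow> (nat \<times> nat \<times> nat) set" where
  "Delta I J = {(k, h, 2) | k h. h < k \<and> k \<in> divisors_of I \<and> coprime k h}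
             \<union> {(k, h, i) | k h i. i \<in> {0, 1} \<and> h < k \<and> k \<in> divisors_of J \<and> coprime k h}"

definition comp_alg :: "nat \<times> nat \<times> nat \<Rightarrow> elt halg" where
  "comp_alg d = (case d of (k, h, i) \<Rightarrow> if i = 2 then Luk k else Luk_pair k h)"

definition gbar :: "nat \<times> nat \<times> nat \<Rightarrow> elt" where
  "gbar d = (case d of (k, h, i) \<Rightarrow>
      if i = 0 then gen_el k h else if i = 1 then lneg k h (gen_el k h) else (int h, 0))"

definition prod_alg :: "(nat \<times> nat \<times> nat) set \<Rightarrow> (nat \<times> nat \<times> nat \<Rightarrow> elt) halg" where
  "prod_alg D = \<lparr> hcarrier = {x. (\<forall>d\<in>D. x d \<in> hcarrier (comp_alg d)) \<and> (\<forall>d. d \<notin> D \<longrightarrow> x d = 0)},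
      hmult = (\<lambda>x y d. if d \<in> D then hmult (comp_alg d) (x d) (y d) else 0),
      himp = (\<lambda>x y d. if d \<in> D then himp (comp_alg d) (x d) (y d) else 0),
      hone = (\<lambda>d. if d \<in> D then hone (comp_alg d) else 0) \<rparr>"

definition A_Delta :: "nat set \<Rightarrow> nat set \<Rightarrow> (nat \<times> nat \<times> nat \<Rightarrow> elt) halg" where
  "A_Delta I J = prod_alg (Delta I J)"

definition gbar_Delta :: "nat set \<Rightarrow> nat set \<Rightarrow> nat \<times> nat \<times> nat \<Rightarrow> elt" where
  "gbar_Delta I J = (\<lambda>d. if d \<in> Delta I J then gbar d else 0)"

definition B_Delta :: "nat set \<Rightarrow> nat set \<Rightarrow> (nat \<times> nat \<times> nat \<Rightarrow> elt) set" where
  "B_Delta I J = gen (A_Delta I J) {gbar_Delta I J}"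

definition embeddable_into :: "'a halg \<Rightarrow> 'b halg \<Rightarrow> 'b set \<Rightarrow> bool" where
  "embeddable_into A B S \<longleftrightarrow> (\<exists>f. f ` hcarrier A \<subseteq> S \<and> inj_on f (hcarrier A)
     \<and> f (hone A) = hone B
     \<and> (\<forall>a\<in>hcarrier A. \<forall>b\<in>hcarrier A. f (hmult A a b) = hmult B (f a) (f b)
                                     \<and> f (himp A a b) = himp B (f a) (f b)))"

end

theory Submission
  imports Defs
begin

text \<open>
  Every factor of \<open>A_Delta\<close> is a chain \<open>\<Gamma>(\<int> \<times>\<^sub>l \<int>, u)\<close> with \<open>fst u\<close> bounded by the
  largest element of \<open>I \<union> J\<close>.  The embedding of \<open>\<L>\<^sub>j\<^sub>,\<^sub>1\<close> is a product of homomorphisms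
  into the factors: a linear map \<open>(a, b) \<mapsto> (a, c b + e a)\<close> on a few special factors and the
  constant map onto the top element on all others.  It sends the generator of \<open>\<L>\<^sub>j\<^sub>,\<^sub>1\<close> into
  \<open>B_Delta\<close> as soon as its image is \<open>t(g\<^sub>\<Delta>)\<close> for a one-variable term \<open>t\<close>.

  Such a term is a guard ``if \<open>D(x)\<close> is infinitesimal then \<open>Q(x)\<close> else \<open>1\<close>''.  For \<open>N\<close> beyond
  all ranks, \<open>x\<^sup>N = 0\<close> in every factor in which \<open>g\<^sub>\<Delta>\<close> is not co-infinitesimal, so \<open>y \<mapsto> (y \<rightarrow> x\<^sup>N)\<close>
  is a negation and truncated sums become expressible.  With them \<open>D(x)\<close> is infinitesimal
  only when \<open>j x\<close> and the unit have the same rank, which singles out the special factors,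
  and there \<open>Q(x) = x \<and> \<not>((j - 1) x)\<close> is the required image.  The one factor \<open>\<L>\<^sub>1\<^sub>,\<^sub>0\<close>
  where \<open>g\<^sub>\<Delta>\<close> is co-infinitesimal is sent to the top by one more implication, from a power
  of \<open>x\<^sup>N \<rightarrow> x\<^sup>N\<^sup>+\<^sup>1\<close>.
\<close>

section \<open>The lexicographic group \<open>\<int> \<times>\<^sub>l \<int>\<close>\<close>

instance prod :: (linordered_ab_group_add, linordered_ab_group_add) linordered_ab_group_add
  by standard (auto simp: less_eq_prod_def)

lemma lex_le_iff: "(x::elt) \<le> y \<longleftrightarrow> fst x < fst y \<or> fst x = fst y \<and> snd x \<le> snd y"
  by (cases x; cases y) auto

lemma lex_less_iff: "(x::elt) < y \<longleftrightarrow> fst x < fst y \<or> fst x = fst y \<and> snd x < snd y"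
  by (cases x; cases y) (auto simp: less_prod_def')

lemma less_if_fst_less: "fst (a::elt) < fst b \<Longrightarrow> a < b"
  by (simp add: lex_less_iff)

lemma fst_nonneg: "0 \<le> (a::elt) \<Longrightarrow> 0 \<le> fst a"
  by (auto simp: lex_le_iff)

definition det :: "elt \<Rightarrow> elt \<Rightarrow> int" where
  "det x y = fst x * snd y - snd x * fst y"

definition nmul :: "nat \<Rightarrow> elt \<Rightarrow> elt" where
  "nmul n y = (int n * fst y, int n * snd y)"

lemma nmul_0 [simp]: "nmul 0 y = 0"
  by (simp add: nmul_def zero_prod_def)

lemma nmul_zero [simp]: "nmul n 0 = 0"
  by (simp add: nmul_def zero_prod_def)

lemma nmul_Suc: "nmul (Suc n) y = y + nmul n y"
  by (simp add: nmul_def algebra_simps prod_eq_iff)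

lemma fst_nmul [simp]: "fst (nmul n y) = int n * fst y"
  by (simp add: nmul_def)

lemma snd_nmul [simp]: "snd (nmul n y) = int n * snd y"
  by (simp add: nmul_def)

definition lin :: "int \<Rightarrow> int \<Rightarrow> elt \<Rightarrow> elt" where
  "lin c e x = (fst x, c * snd x + e * fst x)"

lemma lin_add: "lin c e (a + b) = lin c e a + lin c e b"
  by (simp add: lin_def algebra_simps)

lemma lin_diff: "lin c e (a - b) = lin c e a - lin c e b"
  by (simp add: lin_def algebra_simps)

lemma lin_zero: "lin c e 0 = 0"
  by (simp add: lin_def zero_prod_def)

lemma lin_mono: "0 \<le> c \<Longrightarrow> a \<le> b \<Longrightarrow> lin c e a \<le> lin c e b"
  by (auto simp: lin_def lex_le_iff intro: mult_left_mono)

lemma lin_max: "0 \<le> c \<Longrightarrow> lin c e (max a b) = max (lin c e a) (lin c e b)"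
  by (cases "a \<le> b") (auto simp: max_def dest: lin_mono[of c a b e] lin_mono[of c b a e])

lemma lin_min: "0 \<le> c \<Longrightarrow> lin c e (min a b) = min (lin c e a) (lin c e b)"
  by (cases "a \<le> b") (auto simp: min_def dest: lin_mono[of c a b e] lin_mono[of c b a e])

section \<open>The algebras \<open>\<Gamma>(\<int> \<times>\<^sub>l \<int>, u)\<close>\<close>

definition Gamma_alg :: "elt \<Rightarrow> elt halg" where
  "Gamma_alg u = \<lparr> hcarrier = {a. 0 \<le> a \<and> a \<le> u}, hmult = gmult u, himp = gimp u, hone = u \<rparr>"

lemma Gamma_alg_simps [simp]:
  "hcarrier (Gamma_alg u) = {a. 0 \<le> a \<and> a \<le> u}"
  "hmult (Gamma_alg u) = gmult u" "himp (Gamma_alg u) = gimp u" "hone (Gamma_alg u) = u"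
  by (simp_all add: Gamma_alg_def)

lemma Luk_pair_eq_Gamma_alg: "Luk_pair n k = Gamma_alg (int n, int k)"
  by (simp add: Luk_pair_def Gamma_alg_def)

lemma gmult_closed:
  assumes "0 \<le> a" "a \<le> u" "0 \<le> b" "b \<le> u"
  shows "0 \<le> gmult u a b \<and> gmult u a b \<le> u"
proof -
  have "a + b - u \<le> u" using assms by (simp add: algebra_simps add_mono)
  then show ?thesis unfolding gmult_def using assms by simp
qed

lemma gimp_closed:
  assumes "0 \<le> a" "a \<le> u" "0 \<le> b" "b \<le> u"
  shows "0 \<le> gimp u a b \<and> gimp u a b \<le> u"
proof -
  have "0 \<le> u - a + b" using assms by simp
  then show ?thesis unfolding gimp_def using assms by (auto simp: min_def)
qed

lemma gimp_zero: "0 \<le> x \<Longrightarrow> gimp u x 0 = u - x"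
  by (simp add: gimp_def min_def)

lemma lin_gmult: "0 \<le> c \<Longrightarrow> lin c e (gmult u a b) = gmult (lin c e u) (lin c e a) (lin c e b)"
  by (simp add: gmult_def lin_max lin_add lin_diff lin_zero)

lemma lin_gimp: "0 \<le> c \<Longrightarrow> lin c e (gimp u a b) = gimp (lin c e u) (lin c e a) (lin c e b)"
  by (simp add: gimp_def lin_min lin_add lin_diff)

lemma gen_subset_gen:
  assumes "y \<in> gen A X"
  shows "gen A {y} \<subseteq> gen A X"
proof
  fix z assume "z \<in> gen A {y}"
  then show "z \<in> gen A X" using assms by induction (auto intro: gen.intros)
qed

lemma gen_hom_image:
  assumes "x \<in> gen A X"
    and hom: "\<And>a b. a \<in> gen A X \<Longrightarrow> b \<in> gen A X \<Longrightarrow>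
      f (hmult A a b) = hmult B (f a) (f b) \<and> f (himp A a b) = himp B (f a) (f b)"
    and one: "f (hone A) = hone B"
  shows "f x \<in> gen B (f ` X)"
  using assms(1)
proof induction
  case (gen_mult a b)
  then show ?case using hom by (metis gen.gen_mult)
next
  case (gen_imp a b)
  then show ?case using hom by (metis gen.gen_imp)
next
  case gen_one
  then show ?case unfolding one by (rule gen.gen_one)
qed (auto intro: gen.gen_base)

lemma gen_Gamma_alg_subset:
  assumes "0 \<le> g" "g \<le> u"
  shows "gen (Gamma_alg u) {g} \<subseteq> {a. 0 \<le> a \<and> a \<le> u}"
proof
  fix z assume "z \<in> gen (Gamma_alg u) {g}"
  then show "z \<in> {a. 0 \<le> a \<and> a \<le> u}" using assms
    by induction (auto simp: gmult_closed gimp_closed)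
qed

lemma gen_Gamma_alg_lattice:
  assumes "z \<in> gen (Gamma_alg u) {a}"
  shows "\<exists>m n. z = (m * fst a + n * fst u, m * snd a + n * snd u)"
  using assms
proof induction
  case (gen_base x) then show ?case by (intro exI[of _ 1] exI[of _ 0]) simp
next
  case gen_one then show ?case by (intro exI[of _ 0] exI[of _ 1]) simp
next
  case (gen_mult x y)
  then obtain m1 n1 m2 n2 where x: "x = (m1 * fst a + n1 * fst u, m1 * snd a + n1 * snd u)"
    and y: "y = (m2 * fst a + n2 * fst u, m2 * snd a + n2 * snd u)" by blast
  show ?case
  proof (cases "x + y - u \<ge> 0")
    case True
    then have "hmult (Gamma_alg u) x y = x + y - u" by (simp add: gmult_def)
    then show ?thesis
      by (intro exI[of _ "m1 + m2"] exI[of _ "n1 + n2 - 1"]) (simp add: x y prod_eq_iff algebra_simps)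
  next
    case False
    then have "x + y - u \<le> 0" by simp
    then have "hmult (Gamma_alg u) x y = 0" by (simp add: gmult_def max_def)
    then show ?thesis by (intro exI[of _ 0] exI[of _ 0]) (simp add: zero_prod_def)
  qed
next
  case (gen_imp x y)
  then obtain m1 n1 m2 n2 where x: "x = (m1 * fst a + n1 * fst u, m1 * snd a + n1 * snd u)"
    and y: "y = (m2 * fst a + n2 * fst u, m2 * snd a + n2 * snd u)" by blast
  show ?case
  proof (cases "u - x + y \<le> u")
    case True
    then have "himp (Gamma_alg u) x y = u - x + y" by (simp add: gimp_def)
    then show ?thesis
      by (intro exI[of _ "m2 - m1"] exI[of _ "1 - n1 + n2"]) (simp add: x y prod_eq_iff algebra_simps)
  next
    case False
    then have "himp (Gamma_alg u) x y = u" by (simp add: gimp_def min_def)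
    then show ?thesis by (intro exI[of _ 0] exI[of _ 1]) simp
  qed
qed

section \<open>The generators \<open>g\<^sub>k\<^sub>,\<^sub>h\<close>\<close>

lemma gen_Gamma_alg_diff:
  assumes "0 \<in> gen (Gamma_alg u) X" "x \<in> gen (Gamma_alg u) X" "y \<in> gen (Gamma_alg u) X"
    and "0 \<le> x" "x \<le> y" "y \<le> u"
  shows "y - x \<in> gen (Gamma_alg u) X"
proof -
  have "gmult u y (gimp u x 0) \<in> gen (Gamma_alg u) X"
    using assms(1-3) by (metis Gamma_alg_simps(2,3) gen.gen_imp gen.gen_mult)
  moreover have "gmult u y (gimp u x 0) = y - x"
    using assms(4-6) by (simp add: gimp_zero gmult_def max_def algebra_simps)
  ultimately show ?thesis by simp
qed

lemma gen_Gamma_alg_add: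
  assumes "0 \<in> gen (Gamma_alg u) X" "x \<in> gen (Gamma_alg u) X" "y \<in> gen (Gamma_alg u) X"
    and "0 \<le> x" "x + y \<le> u"
  shows "x + y \<in> gen (Gamma_alg u) X"
proof -
  have "gimp u (gimp u x 0) y \<in> gen (Gamma_alg u) X"
    using assms(1-3) by (metis Gamma_alg_simps(3) gen.gen_imp)
  moreover have "gimp u (gimp u x 0) y = x + y"
    using assms(4,5) by (simp add: gimp_zero gimp_def min_def algebra_simps)
  ultimately show ?thesis by simp
qed

lemma column_mem:
  fixes S :: "elt set"
  assumes u10: "(1,0) \<le> u"
    and add: "\<And>x y. x \<in> S \<Longrightarrow> y \<in> S \<Longrightarrow> x + y \<le> u \<Longrightarrow> x + y \<in> S"
    and "0 \<in> S" "(0,1) \<in> S"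
  shows "(0, int n) \<in> S"
proof (induction n)
  case (Suc n)
  have "(0::int, int n) + (0,1) \<le> u" using u10 by (auto simp: lex_le_iff)
  from add[OF Suc assms(4) this] show ?case by (simp add: add.commute)
qed (use assms(3) in \<open>simp add: zero_prod_def\<close>)

text \<open>The Euclidean algorithm on a unimodular pair \<open>x \<le> y\<close>, run inside any set closed under
  the differences and bounded sums that a subalgebra of \<open>\<Gamma>(\<int> \<times>\<^sub>l \<int>, u)\<close> provides.\<close>

lemma unit_vectors_mem_if_unimodular:
  fixes S :: "elt set"
  assumes u10: "(1,0) \<le> u"
    and sub: "\<And>x y. x \<in> S \<Longrightarrow> y \<in> S \<Longrightarrow> x \<le> y \<Longrightarrow> y - x \<in> S"
    and add: "\<And>x y. x \<in> S \<Longrightarrow> y \<in> S \<Longrightarrow> x + y \<le> u \<Longrightarrow> x + y \<in> S"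
    and nonneg: "\<And>x. x \<in> S \<Longrightarrow> 0 \<le> x"
  shows "x \<in> S \<Longrightarrow> y \<in> S \<Longrightarrow> x \<le> y \<Longrightarrow> det x y = 1 \<or> det x y = -1 \<Longrightarrow> (0,1) \<in> S \<and> (1,0) \<in> S"
proof (induction "nat (fst x + fst y)" arbitrary: x y rule: less_induct)
  case less
  have x0: "0 \<le> x" using nonneg less.prems by auto
  then have fx: "0 \<le> fst x" by (auto simp: lex_le_iff)
  have fxy: "fst x \<le> fst y" using less.prems(3) by (auto simp: lex_le_iff)
  show ?case
  proof (cases "fst x = 0")
    case True
    then have sx: "0 \<le> snd x" using x0 by (auto simp: lex_le_iff)
    have "snd x * fst y = 1 \<or> snd x * fst y = -1" using less.prems(4) True by (auto simp: det_def)
    moreover have "0 \<le> snd x * fst y" using sx fxy True by simp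
    ultimately have "snd x * fst y = 1" by linarith
    then have "snd x = 1" and fy1: "fst y = 1" using sx fxy True
      by (auto simp: zmult_eq_1_iff)
    then have x01: "x = (0,1)" using True by (cases x) auto
    have "(0::elt) \<in> S" using sub[OF less.prems(1) less.prems(1)] by simp
    note cols = column_mem[OF u10 add this less.prems(1)[unfolded x01]]
    have "(1,0) \<in> S"
    proof (cases "0 \<le> snd y")
      case True
      have c: "(0, snd y) \<in> S" using cols[of "nat (snd y)"] True by simp
      have "(0, snd y) \<le> y" using fy1 by (auto simp: lex_le_iff)
      from sub[OF c less.prems(2) this] show ?thesis using fy1 by (cases y) auto
    next
      case False
      have c: "(0, - snd y) \<in> S" using cols[of "nat (- snd y)"] False by simp
      have "y + (0, - snd y) = (1,0)" using fy1 by (cases y) auto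
      with add[OF less.prems(2) c] u10 show ?thesis by simp
    qed
    then show ?thesis using x01 less.prems(1) by simp
  next
    case False
    then have fxp: "0 < fst x" using fx by simp
    define z where "z = y - x"
    have zS: "z \<in> S" using sub[OF less.prems(1,2,3)] z_def by simp
    have dz: "det x z = det x y" by (simp add: z_def det_def algebra_simps)
    have mz: "nat (fst x + fst z) < nat (fst x + fst y)" "nat (fst z + fst x) < nat (fst x + fst y)"
      using fxp fxy by (simp_all add: z_def)
    show ?thesis
    proof (cases "x \<le> z")
      case True
      show ?thesis by (rule less.hyps[OF mz(1) less.prems(1) zS True]) (use less.prems(4) dz in simp)
    next
      case False
      then have "z \<le> x" by simp
      moreover have "det z x = - det x z" by (simp add: det_def)
      ultimately show ?thesis using less.hyps[OF mz(2) zS less.prems(1)] less.prems(4) dz by auto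
    qed
  qed
qed

lemma interval_subset_if_unit_vectors_mem:
  fixes S :: "elt set"
  assumes u10: "(1,0) \<le> u"
    and sub: "\<And>x y. x \<in> S \<Longrightarrow> y \<in> S \<Longrightarrow> x \<le> y \<Longrightarrow> y - x \<in> S"
    and add: "\<And>x y. x \<in> S \<Longrightarrow> y \<in> S \<Longrightarrow> x + y \<le> u \<Longrightarrow> x + y \<in> S"
    and e1: "(0,1) \<in> S" and e2: "(1,0) \<in> S" and uS: "u \<in> S"
  shows "{z. 0 \<le> z \<and> z \<le> u} \<subseteq> S"
proof
  fix z assume z: "z \<in> {z. 0 \<le> z \<and> z \<le> u}"
  have zero: "(0,0) \<in> S" using sub[OF e1 e1] by (simp add: zero_prod_def)
  note cols = column_mem[OF u10 add zero[folded zero_prod_def] e1]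
  have rows: "int p < fst u \<Longrightarrow> (int p, 0) \<in> S" for p
  proof (induction p)
    case (Suc p)
    have eq: "(int (Suc p), 0::int) = (int p, 0::int) + (1,0)" by (simp add: prod_eq_iff)
    have "(int p, 0::int) + (1,0) \<le> u" using Suc.prems by (auto simp: lex_le_iff)
    from add[OF Suc.IH[OF _] e2 this] Suc.prems show ?case unfolding eq by simp
  qed (use zero in simp)
  obtain p q where zpq: "z = (p,q)" by (cases z)
  have p0: "0 \<le> p" and pu: "p \<le> fst u" using z zpq by (auto simp: lex_le_iff)
  consider "p = 0" | "p = fst u" "p \<noteq> 0" | "0 < p" "p < fst u" using p0 pu by linarith
  then show "z \<in> S"
  proof cases
    case 1
    then have "0 \<le> q" using z zpq by (auto simp: lex_le_iff)
    then show ?thesis using cols[of "nat q"] 1 zpq by simp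
  next
    case 2
    then have "q \<le> snd u" using z zpq by (auto simp: lex_le_iff)
    have c: "(0, snd u - q) \<in> S" using cols[of "nat (snd u - q)"] \<open>q \<le> snd u\<close> by simp
    have "(0, snd u - q) \<le> u" using u10 by (auto simp: lex_le_iff)
    from sub[OF c uS this] show ?thesis using 2 zpq by (cases u) auto
  next
    case 3
    have r: "(p, 0) \<in> S" using rows[of "nat p"] 3 by simp
    show ?thesis
    proof (cases "0 \<le> q")
      case True
      have "(p,0) + (0,q) \<le> u" using 3 by (auto simp: lex_le_iff)
      from add[OF r _ this] show ?thesis using cols[of "nat q"] True zpq by simp
    next
      case False
      have "(0,-q) \<le> (p,0)" using 3 by (auto simp: lex_le_iff)
      from sub[OF _ r this] show ?thesis using cols[of "nat (-q)"] False zpq by simp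
    qed
  qed
qed

text \<open>For \<open>k \<ge> 2\<close> the generator \<open>g\<^sub>k\<^sub>,\<^sub>h\<close> of \<open>\<L>\<^sub>k\<^sub>,\<^sub>h\<close> is the unique element \<open>a\<close> with
  \<open>0 \<le> a \<le> \<not>a\<close> that forms a lattice basis together with the unit.\<close>

definition half_unimodular :: "elt \<Rightarrow> elt \<Rightarrow> bool" where
  "half_unimodular u a \<longleftrightarrow> 0 \<le> a \<and> a + a \<le> u \<and> (det a u = 1 \<or> det a u = -1)"

lemma half_unimodular_bounds:
  assumes "half_unimodular u a"
  shows "0 \<le> a" "a \<le> u" "a \<le> gimp u a 0"
proof -
  have a0: "0 \<le> a" and aa: "a + a \<le> u" using assms by (auto simp: half_unimodular_def)
  then show "0 \<le> a" "a \<le> u" by (auto intro: order_trans[OF add_increasing[OF a0 order_refl]])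
  show "a \<le> gimp u a 0" using a0 aa by (simp add: gimp_zero algebra_simps)
qed

lemma gen_half_unimodular:
  assumes u10: "(1,0) \<le> u" and a: "half_unimodular u a"
  shows "gen (Gamma_alg u) {a} = {z. 0 \<le> z \<and> z \<le> u}"
proof -
  note a_bounds = half_unimodular_bounds[OF a]
  define S where "S = gen (Gamma_alg u) {a}"
  have Sc: "S \<subseteq> {z. 0 \<le> z \<and> z \<le> u}"
    unfolding S_def using gen_Gamma_alg_subset a_bounds by blast
  have aS: "a \<in> S" by (simp add: S_def gen.gen_base)
  have uS: "u \<in> S" unfolding S_def using gen.gen_one[of "Gamma_alg u" "{a}"] by simp
  have "gmult u a a = 0" using a by (simp add: half_unimodular_def gmult_def max_def)
  then have zS: "0 \<in> S" using gen.gen_mult[OF aS[unfolded S_def] aS[unfolded S_def]] by (simp add: S_def)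
  have sub: "y - x \<in> S" if "x \<in> S" "y \<in> S" "x \<le> y" for x y
    using gen_Gamma_alg_diff[of u "{a}" x y] zS that Sc by (auto simp: S_def)
  have add: "x + y \<in> S" if "x \<in> S" "y \<in> S" "x + y \<le> u" for x y
    using gen_Gamma_alg_add[of u "{a}" x y] zS that Sc by (auto simp: S_def)
  have "det a u = 1 \<or> det a u = -1" using a by (simp add: half_unimodular_def)
  then have "(0,1) \<in> S \<and> (1,0) \<in> S"
    using unit_vectors_mem_if_unimodular[OF u10 sub add] Sc aS uS a_bounds by blast
  then show ?thesis
    using interval_subset_if_unit_vectors_mem[OF u10 sub add] uS Sc by (auto simp: S_def)
qed

lemma half_unimodular_if_generator:
  assumes u10: "(1,0) \<le> u" and a: "0 \<le> a" "a \<le> gimp u a 0"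
    and g: "gen (Gamma_alg u) {a} = {z. 0 \<le> z \<and> z \<le> u}"
  shows "half_unimodular u a"
proof -
  have "(1,0) \<in> gen (Gamma_alg u) {a}" unfolding g using u10 by (simp add: lex_le_iff)
  then obtain m1 n1 where c1: "m1 * fst a + n1 * fst u = 1" "m1 * snd a + n1 * snd u = 0"
    using gen_Gamma_alg_lattice by fastforce
  have "(0,1) \<in> gen (Gamma_alg u) {a}" unfolding g using u10 by (auto simp: lex_le_iff)
  then obtain m2 n2 where c2: "m2 * fst a + n2 * fst u = 0" "m2 * snd a + n2 * snd u = 1"
    using gen_Gamma_alg_lattice by fastforce
  have "(m1 * n2 - n1 * m2) * det a u = (m1 * fst a + n1 * fst u) * (m2 * snd a + n2 * snd u)
     - (m1 * snd a + n1 * snd u) * (m2 * fst a + n2 * fst u)"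
    unfolding det_def by (simp add: algebra_simps)
  also have "\<dots> = 1" unfolding c1 c2 by simp
  finally have "det a u = 1 \<or> det a u = -1" unfolding zmult_eq_1_iff by blast
  moreover have "a + a \<le> u" using a by (simp add: gimp_zero le_diff_eq)
  ultimately show ?thesis using a unfolding half_unimodular_def by blast
qed

lemma half_unimodular_fst:
  assumes k: "2 \<le> k" and a: "half_unimodular (int k, int h) (r, s)"
  shows "1 \<le> r" "2 * r \<le> int k"
proof -
  have r0: "0 \<le> r" and d: "r * int h - s * int k = 1 \<or> r * int h - s * int k = -1"
    using a by (auto simp: half_unimodular_def lex_le_iff det_def)
  show "2 * r \<le> int k" using a by (auto simp: half_unimodular_def lex_le_iff)
  have "r \<noteq> 0"
  proof
    assume "r = 0"
    then have "1 = int k * (-s) \<or> 1 = int k * s" using d by (auto simp: algebra_simps)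
    then have "int k dvd 1" by (metis dvdI)
    then show False using k by simp
  qed
  then show "1 \<le> r" using r0 by simp
qed

lemma half_unimodular_det_eq_imp_eq:
  assumes k: "2 \<le> k" and cop: "coprime k h"
    and a: "half_unimodular (int k, int h) (r, s)" and b: "half_unimodular (int k, int h) (r', s')"
    and eq: "det (r, s) (int k, int h) = det (r', s') (int k, int h)"
  shows "(r, s) = (r', s')"
proof -
  have "(r - r') * int h = (s - s') * int k" using eq by (simp add: det_def algebra_simps)
  then have "int k dvd (r - r') * int h" by (metis dvd_triv_right)
  moreover have "coprime (int k) (int h)" using cop by simp
  ultimately obtain c where c: "r - r' = int k * c" by (auto simp: coprime_dvd_mult_left_iff)
  have "c = 0"
  proof (rule ccontr)
    assume "c \<noteq> 0"
    then have "int k \<le> \<bar>int k * c\<bar>" using k by (simp add: abs_mult)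
    then show False using c half_unimodular_fst[OF k a] half_unimodular_fst[OF k b] k by linarith
  qed
  then show ?thesis using c eq k by (simp add: det_def)
qed

text \<open>Opposite determinants force \<open>r + r' = k\<close>, so both elements lie in the middle,
  where \<open>a \<le> \<not>a\<close> makes the determinant nonnegative.\<close>

lemma half_unimodular_det_not_opposite:
  assumes k: "2 \<le> k" and cop: "coprime k h"
    and a: "half_unimodular (int k, int h) (r, s)" and b: "half_unimodular (int k, int h) (r', s')"
  shows "det (r, s) (int k, int h) \<noteq> - det (r', s') (int k, int h)"
proof
  assume opp: "det (r, s) (int k, int h) = - det (r', s') (int k, int h)"
  note ra = half_unimodular_fst[OF k a] and rb = half_unimodular_fst[OF k b]
  have "(r + r') * int h = (s + s') * int k" using opp by (simp add: det_def algebra_simps)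
  then have "int k dvd (r + r') * int h" by (metis dvd_triv_right)
  moreover have "coprime (int k) (int h)" using cop by simp
  ultimately obtain c where c: "r + r' = int k * c" by (auto simp: coprime_dvd_mult_left_iff)
  have "c = 1"
  proof -
    have "c < 1 \<Longrightarrow> int k * c \<le> 0" using k by (simp add: mult_nonneg_nonpos)
    moreover have "2 \<le> c \<Longrightarrow> int k * 2 \<le> int k * c" by (rule mult_left_mono) simp_all
    ultimately show ?thesis using c ra rb k by linarith
  qed
  then have "r + r' = int k" using c by simp
  then have mid: "2 * r = int k" "2 * r' = int k" using ra rb by linarith+
  have "2 * s \<le> int h" "2 * s' \<le> int h"
    using a b mid by (auto simp: half_unimodular_def lex_le_iff)
  then have "0 \<le> r * (int h - 2 * s)" "0 \<le> r' * (int h - 2 * s')" using ra rb by simp_all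
  moreover have "det (r, s) (int k, int h) = r * (int h - 2 * s)"
    by (simp add: det_def algebra_simps flip: mid(1))
  moreover have "det (r', s') (int k, int h) = r' * (int h - 2 * s')"
    by (simp add: det_def algebra_simps flip: mid(2))
  moreover have "det (r, s) (int k, int h) \<noteq> 0" "det (r', s') (int k, int h) \<noteq> 0"
    using a b by (auto simp: half_unimodular_def)
  ultimately show False using opp by linarith
qed

lemma half_unimodular_unique:
  assumes k: "2 \<le> k" and cop: "coprime k h"
    and a: "half_unimodular (int k, int h) a" and b: "half_unimodular (int k, int h) b"
  shows "a = b"
proof -
  obtain r s r' s' where rs: "a = (r, s)" "b = (r', s')" by fastforce
  have "det a (int k, int h) = det b (int k, int h) \<or> det a (int k, int h) = - det b (int k, int h)"
    using a b by (auto simp: half_unimodular_def)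
  then show ?thesis
    using half_unimodular_det_eq_imp_eq[OF k cop] half_unimodular_det_not_opposite[OF k cop] a b rs
    by metis
qed

lemma half_unimodular_exists:
  assumes k: "2 \<le> k" and cop: "coprime k h"
  shows "\<exists>a. half_unimodular (int k, int h) a"
proof -
  have "coprime (int h) (int k)" using cop by (simp add: coprime_commute)
  then obtain x y where xy: "x * int h + y * int k = 1"
    using bezout_int[of "int h" "int k"] by (auto simp: coprime_iff_gcd_eq_1)
  define r where "r = x mod int k"
  define s where "s = - y - (x div int k) * int h"
  have "r * int h - s * int k = x * int h + y * int k"
    unfolding r_def s_def by (simp add: algebra_simps flip: minus_div_mult_eq_mod)
  then have det1: "r * int h - s * int k = 1" using xy by simp
  have r0: "0 \<le> r" "r < int k" using k by (auto simp: r_def)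
  have "r \<noteq> 0"
  proof
    assume "r = 0"
    then have "int k dvd 1" using det1 by (metis diff_0 dvdI minus_mult_right mult.commute mult_zero_left)
    then show False using k by simp
  qed
  consider "2 * r < int k" | "2 * r = int k" | "2 * r > int k" by linarith
  then show ?thesis
  proof cases
    case 1
    then show ?thesis using r0 \<open>r \<noteq> 0\<close> det1
      by (intro exI[of _ "(r,s)"]) (auto simp: half_unimodular_def lex_le_iff det_def)
  next
    case 2
    then have "r * (int h - 2 * s) = 1" using det1 by (simp add: algebra_simps flip: 2)
    then have "r = 1" "int h - 2 * s = 1" using r0 by (auto simp: zmult_eq_1_iff)
    then show ?thesis using 2 det1
      by (intro exI[of _ "(r,s)"]) (auto simp: half_unimodular_def lex_le_iff det_def)
  next
    case 3
    have "(int k - r) * int h - (int h - s) * int k = -1" using det1 by (simp add: algebra_simps)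
    then show ?thesis using 3 r0
      by (intro exI[of _ "(int k - r, int h - s)"]) (auto simp: half_unimodular_def lex_le_iff det_def)
  qed
qed

lemma lneg_eq_gimp: "lneg k h a = gimp (int k, int h) a 0"
  by (simp add: lneg_def Luk_pair_def)

lemma gen_el_half_unimodular:
  assumes k: "2 \<le> k" and cop: "coprime k h"
  shows "half_unimodular (int k, int h) (gen_el k h)"
proof -
  let ?u = "(int k, int h)"
  have u10: "(1,0) \<le> ?u" using k by (simp add: lex_le_iff)
  let ?P = "\<lambda>a. a \<in> hcarrier (Luk_pair k h) \<and> a \<le> lneg k h a
    \<and> gen (Luk_pair k h) {a} = hcarrier (Luk_pair k h)"
  have P_iff: "?P a \<longleftrightarrow> half_unimodular ?u a" for a
  proof
    assume "?P a"
    then show "half_unimodular ?u a"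
      by (intro half_unimodular_if_generator[OF u10]) (auto simp: Luk_pair_eq_Gamma_alg lneg_eq_gimp)
  next
    assume "half_unimodular ?u a"
    then show "?P a"
      using gen_half_unimodular[OF u10] half_unimodular_bounds[of ?u a]
      by (simp add: Luk_pair_eq_Gamma_alg lneg_eq_gimp)
  qed
  have "\<exists>!a. ?P a"
    using half_unimodular_exists[OF k cop] half_unimodular_unique[OF k cop] P_iff by blast
  then have "?P (THE a. ?P a)" by (rule theI')
  then show ?thesis using P_iff k by (simp add: gen_el_def)
qed

lemma gen_el_eqI:
  assumes "2 \<le> k" "coprime k h" "half_unimodular (int k, int h) a"
  shows "gen_el k h = a"
  using half_unimodular_unique[OF assms(1,2) gen_el_half_unimodular[OF assms(1,2)] assms(3)] .

lemma gen_el_1: "gen_el (Suc 0) h = (0,1)"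
  by (simp add: gen_el_def)

section \<open>Embeddings given by one-variable terms\<close>

datatype hterm = Var | One | Mul hterm hterm | Imp hterm hterm

primrec heval :: "('a, 'b) halg_scheme \<Rightarrow> 'a \<Rightarrow> hterm \<Rightarrow> 'a" where
  "heval A x Var = x"
| "heval A x One = hone A"
| "heval A x (Mul s t) = hmult A (heval A x s) (heval A x t)"
| "heval A x (Imp s t) = himp A (heval A x s) (heval A x t)"

primrec geval :: "elt \<Rightarrow> elt \<Rightarrow> hterm \<Rightarrow> elt" where
  "geval u x Var = x"
| "geval u x One = u"
| "geval u x (Mul s t) = gmult u (geval u x s) (geval u x t)"
| "geval u x (Imp s t) = gimp u (geval u x s) (geval u x t)"

lemma heval_in_gen: "heval A x t \<in> gen A {x}"
  by (induction t) (auto intro: gen.intros)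

lemma geval_closed: "0 \<le> x \<Longrightarrow> x \<le> u \<Longrightarrow> 0 \<le> geval u x t \<and> geval u x t \<le> u"
  by (induction t) (auto simp: gmult_closed gimp_closed)

definition comp_unit :: "nat \<times> nat \<times> nat \<Rightarrow> elt" where
  "comp_unit d = (case d of (k, h, i) \<Rightarrow> if i = 2 then (int k, 0) else (int k, int h))"

lemma comp_unit_simps [simp]:
  "comp_unit (k, h, 0) = (int k, int h)"
  "comp_unit (k, h, Suc 0) = (int k, int h)"
  "comp_unit (k, h, 2) = (int k, 0)"
  by (simp_all add: comp_unit_def)

lemma comp_unit_nonneg: "0 \<le> comp_unit d"
  by (auto simp: comp_unit_def lex_le_iff split: prod.splits)

lemma comp_alg_ops:
  "hmult (comp_alg d) = gmult (comp_unit d)" "himp (comp_alg d) = gimp (comp_unit d)"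
  "hone (comp_alg d) = comp_unit d"
  by (auto simp: comp_alg_def comp_unit_def Luk_def Luk_pair_def split: prod.splits)

lemma heval_prod_alg:
  assumes "\<And>d. d \<notin> D \<Longrightarrow> X d = 0"
  shows "heval (prod_alg D) X t d = (if d \<in> D then geval (comp_unit d) (X d) t else 0)"
  using assms by (induction t) (auto simp: prod_alg_def comp_alg_ops)

lemma gbar_simps:
  "gbar (k, h, 0) = gen_el k h"
  "gbar (k, h, Suc 0) = lneg k h (gen_el k h)"
  "gbar (k, h, 2) = (int h, 0)"
  by (simp_all add: gbar_def)

text \<open>The embedding is \<open>x \<mapsto> (\<psi>\<^sub>d x)\<^sub>d\<close> with \<open>\<psi>\<^sub>d = lin (c d) (e d)\<close> on the factors in \<open>S\<close>
  and \<open>\<psi>\<^sub>d\<close> constantly the unit elsewhere.  Its image lies in \<open>B_Delta\<close> because the image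
  of the generator \<open>g\<close> is the value of the term \<open>t\<close> at \<open>g\<^sub>\<Delta>\<close>.\<close>

lemma embeddable_via_term:
  fixes S :: "(nat \<times> nat \<times> nat) set" and c e :: "nat \<times> nat \<times> nat \<Rightarrow> int"
  assumes g: "0 \<le> g" "g \<le> u" and gen_all: "{a. 0 \<le> a \<and> a \<le> u} \<subseteq> gen (Gamma_alg u) {g}"
    and d_inj: "d_inj \<in> Delta I J" "d_inj \<in> S" "c d_inj \<noteq> 0"
    and S: "\<And>d. d \<in> S \<Longrightarrow> 0 \<le> c d \<and> lin (c d) (e d) u = comp_unit d"
    and t: "\<And>d. d \<in> Delta I J \<Longrightarrow>
      geval (comp_unit d) (gbar d) t = (if d \<in> S then lin (c d) (e d) g else comp_unit d)"
  shows "embeddable_into (Gamma_alg u) (A_Delta I J) (B_Delta I J)"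
proof -
  define psi where "psi d x = (if d \<in> S then lin (c d) (e d) x else comp_unit d)" for d x
  define f where "f x = (\<lambda>d. if d \<in> Delta I J then psi d x else 0)" for x
  have psi_hom: "psi d (gmult u a b) = gmult (comp_unit d) (psi d a) (psi d b)
      \<and> psi d (gimp u a b) = gimp (comp_unit d) (psi d a) (psi d b)" for d a b
  proof (cases "d \<in> S")
    case True
    then show ?thesis using S[OF True] lin_gmult lin_gimp by (auto simp: psi_def)
  next
    case False
    then show ?thesis using comp_unit_nonneg[of d] by (simp add: psi_def gmult_def gimp_def)
  qed
  have hom: "f (hmult (Gamma_alg u) a b) = hmult (A_Delta I J) (f a) (f b)
      \<and> f (himp (Gamma_alg u) a b) = himp (A_Delta I J) (f a) (f b)" for a b
    using psi_hom by (simp add: f_def A_Delta_def prod_alg_def comp_alg_ops fun_eq_iff)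
  have one: "f (hone (Gamma_alg u)) = hone (A_Delta I J)"
    using S by (auto simp: f_def psi_def A_Delta_def prod_alg_def comp_alg_ops)
  have "f g = heval (A_Delta I J) (gbar_Delta I J) t"
    using heval_prod_alg[of "Delta I J" "gbar_Delta I J" t] t
    by (auto simp: f_def psi_def A_Delta_def gbar_Delta_def)
  then have "gen (A_Delta I J) {f g} \<subseteq> B_Delta I J"
    unfolding B_Delta_def by (metis gen_subset_gen heval_in_gen)
  moreover have "f x \<in> gen (A_Delta I J) {f g}" if "x \<in> gen (Gamma_alg u) {g}" for x
    using gen_hom_image[OF that hom one] by simp
  ultimately have img: "f ` hcarrier (Gamma_alg u) \<subseteq> B_Delta I J"
    using gen_all by auto
  have "inj_on f (hcarrier (Gamma_alg u))"
  proof (rule inj_onI)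
    fix x y assume "f x = f y"
    then have "f x d_inj = f y d_inj" by simp
    then have "lin (c d_inj) (e d_inj) x = lin (c d_inj) (e d_inj) y"
      using d_inj by (simp add: f_def psi_def)
    then show "x = y" using d_inj(3) by (auto simp: lin_def prod_eq_iff)
  qed
  then show ?thesis
    unfolding embeddable_into_def using img one hom by blast
qed

section \<open>Term operations\<close>

primrec tpow :: "hterm \<Rightarrow> nat \<Rightarrow> hterm" where
  "tpow t 0 = One"
| "tpow t (Suc n) = Mul t (tpow t n)"

text \<open>The constructions below are meant for components \<open>\<Gamma>(\<int> \<times>\<^sub>l \<int>, u)\<close> in which
  \<open>tzero N\<close> evaluates to \<open>0\<close>; there \<open>tneg N\<close> is the negation, \<open>tplus N\<close> the truncated sum
  and \<open>tmultiple N t n\<close> the truncated multiple \<open>(n + 1) t\<close>.\<close>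

definition tzero :: "nat \<Rightarrow> hterm" where
  "tzero N = tpow Var N"

definition tneg :: "nat \<Rightarrow> hterm \<Rightarrow> hterm" where
  "tneg N t = Imp t (tzero N)"

definition tplus :: "nat \<Rightarrow> hterm \<Rightarrow> hterm \<Rightarrow> hterm" where
  "tplus N t s = Imp (tneg N t) s"

primrec tmultiple :: "nat \<Rightarrow> hterm \<Rightarrow> nat \<Rightarrow> hterm" where
  "tmultiple N t 0 = t"
| "tmultiple N t (Suc n) = tplus N t (tmultiple N t n)"

definition tmin :: "hterm \<Rightarrow> hterm \<Rightarrow> hterm" where
  "tmin t s = Mul t (Imp t s)"

text \<open>\<open>D \<odot> (N - 1) D\<close> vanishes when \<open>D\<close> is infinitesimal and has positive first coordinate
  otherwise, so \<open>N\<close> times it is \<open>0\<close> or saturates at the unit.\<close>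

definition tis_infinitesimal :: "nat \<Rightarrow> hterm \<Rightarrow> hterm" where
  "tis_infinitesimal N D = tneg N (tmultiple N (Mul D (tmultiple N D (N - 2))) (N - 1))"

definition tshift :: "nat \<Rightarrow> hterm" where
  "tshift N = Imp (tzero N) (Mul (tzero N) Var)"

text \<open>A bound for how far below the unit a term can get in \<open>\<L>\<^sub>1\<^sub>,\<^sub>0\<close> at \<open>x = (1, -1)\<close>.\<close>

primrec neg_depth :: "hterm \<Rightarrow> nat" where
  "neg_depth Var = 1"
| "neg_depth One = 0"
| "neg_depth (Mul s t) = neg_depth s + neg_depth t"
| "neg_depth (Imp s t) = neg_depth t"

definition tguard :: "nat \<Rightarrow> hterm \<Rightarrow> hterm \<Rightarrow> hterm" where
  "tguard N D Q = Imp (tpow (tshift N) (neg_depth (Imp (tis_infinitesimal N D) Q)))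
     (Imp (tis_infinitesimal N D) Q)"

definition tmult_test :: "nat \<Rightarrow> nat \<Rightarrow> hterm" where
  "tmult_test N j = tplus N (tpow (tneg N Var) j) (Mul Var (tmultiple N Var (j - 2)))"

definition tpart :: "nat \<Rightarrow> nat \<Rightarrow> hterm" where
  "tpart N j = tmin Var (tpow (tneg N Var) (j - 1))"

lemma geval_tpow:
  assumes "0 \<le> x" "x \<le> u"
  shows "geval u x (tpow t n) = max (u - nmul n (u - geval u x t)) 0"
proof (induction n)
  case 0 then show ?case using assms by simp
next
  case (Suc n)
  define y where "y = geval u x t"
  define c where "c = u - y"
  have y: "0 \<le> y" "y \<le> u" using geval_closed[OF assms] by (simp_all add: y_def)
  then have c0: "0 \<le> c" by (simp add: c_def)
  have "geval u x (tpow t (Suc n)) = gmult u y (max (u - nmul n c) 0)"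
    using Suc by (simp add: y_def c_def)
  also have "\<dots> = max (u - nmul (Suc n) c) 0"
  proof (cases "0 \<le> u - nmul n c")
    case True
    then have "gmult u y (max (u - nmul n c) 0) = max (y + (u - nmul n c) - u) 0"
      by (simp add: gmult_def)
    also have "y + (u - nmul n c) - u = u - nmul (Suc n) c"
      by (simp add: c_def nmul_Suc algebra_simps)
    finally show ?thesis .
  next
    case False
    then have "max (u - nmul n c) 0 = 0" by simp
    moreover have "gmult u y 0 = 0" using y by (simp add: gmult_def)
    moreover have "u - nmul (Suc n) c \<le> 0"
      using False c0 by (simp add: nmul_Suc algebra_simps)
        (meson add_increasing dual_order.trans le_add_diff_inverse2 linorder_not_le order.order_iff_strict)
    ultimately show ?thesis by simp
  qed
  finally show ?case by (simp add: y_def c_def)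
qed

lemma geval_tzero:
  assumes "0 \<le> x" "x \<le> u" "fst u < int N" "1 \<le> fst (u - x)"
  shows "geval u x (tzero N) = 0"
proof -
  have "int N * 1 \<le> int N * fst (u - x)" using assms(4) by (intro mult_left_mono) simp_all
  then have "u - nmul N (u - x) < 0" using assms(3) by (intro less_if_fst_less) simp
  then show ?thesis unfolding tzero_def using geval_tpow[OF assms(1,2), of Var N] by simp
qed

context
  fixes u x :: elt and N :: nat
  assumes x0: "0 \<le> x" and xu: "x \<le> u" and zero: "geval u x (tzero N) = 0"
begin

lemma geval_bounds: "0 \<le> geval u x t" "geval u x t \<le> u"
  using geval_closed[OF x0 xu] by auto

lemma geval_tneg: "geval u x (tneg N t) = u - geval u x t"
  unfolding tneg_def using geval_bounds[of t] by (simp add: zero gimp_zero)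

lemma geval_tplus: "geval u x (tplus N t s) = min (geval u x t + geval u x s) u"
  unfolding tplus_def by (simp add: geval_tneg gimp_def algebra_simps)

lemma geval_tmultiple: "geval u x (tmultiple N t n) = min (nmul (Suc n) (geval u x t)) u"
proof (induction n)
  case 0 then show ?case using geval_bounds[of t] by (simp add: nmul_Suc)
next
  case (Suc n)
  define y where "y = geval u x t"
  define a where "a = nmul (Suc n) y"
  have y0: "0 \<le> y" using geval_bounds by (simp add: y_def)
  have "geval u x (tmultiple N t (Suc n)) = min (y + min a u) u"
    by (simp add: geval_tplus Suc y_def a_def)
  also have "\<dots> = min (y + a) u"
  proof (cases "a \<le> u")
    case False
    then have "u \<le> y + a" "u \<le> y + u" using y0 by (simp_all add: add_increasing)
    then show ?thesis using False by simp
  qed simp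
  finally show ?case by (simp add: y_def a_def nmul_Suc[of "Suc n"])
qed

lemma geval_tmin: "geval u x (tmin t s) = min (geval u x t) (geval u x s)"
proof -
  define y where "y = geval u x t"
  define z where "z = geval u x s"
  have "0 \<le> min z y" using geval_bounds by (simp add: y_def z_def)
  moreover have "y + min (u - y + z) u - u = min z y" by (simp add: min_def algebra_simps)
  ultimately show ?thesis by (simp add: tmin_def gimp_def gmult_def min.commute flip: y_def z_def)
qed

lemma geval_tpow_tneg_Var: "geval u x (tpow (tneg N Var) n) = max (u - nmul n x) 0"
  using geval_tpow[OF x0 xu, of "tneg N Var" n] by (simp add: geval_tneg)

lemma geval_tpow_tshift: "geval u x (tpow (tshift N) n) = u"
proof -
  have "gmult u 0 x = 0" using xu by (simp add: gmult_def max_def)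
  then have "geval u x (tshift N) = u" by (simp add: tshift_def zero gimp_def)
  then show ?thesis using geval_tpow[OF x0 xu, of "tshift N" n] x0 xu by simp
qed

lemma geval_tis_infinitesimal_if_fst_zero:
  assumes fu: "1 \<le> fst u" and N2: "2 \<le> N" and fd: "fst (geval u x D) = 0"
  shows "geval u x (tis_infinitesimal N D) = u"
proof -
  define d where "d = geval u x D"
  have "nmul (N - 1) d < u" using fd fu by (intro less_if_fst_less) (simp add: d_def)
  then have "geval u x (tmultiple N D (N - 2)) = nmul (N - 1) d"
    using geval_tmultiple N2 by (simp add: d_def Suc_diff_Suc numeral_2_eq_2)
  moreover have "d + nmul (N - 1) d - u < 0" using fd fu by (intro less_if_fst_less) (simp add: d_def)
  ultimately have "geval u x (Mul D (tmultiple N D (N - 2))) = 0" by (simp add: gmult_def d_def)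
  then show ?thesis unfolding tis_infinitesimal_def
    using geval_tmultiple geval_tneg xu x0 by simp
qed

lemma geval_tis_infinitesimal_if_fst_pos:
  assumes fu: "fst u < int N" and fd: "1 \<le> fst (geval u x D)"
  shows "geval u x (tis_infinitesimal N D) = 0"
proof -
  define d where "d = geval u x D"
  have d: "0 \<le> d" "d \<le> u" using geval_bounds by (simp_all add: d_def)
  have "fst d \<le> fst u" using d(2) by (auto simp: lex_le_iff)
  then have N2: "2 \<le> N" using fu fd by (simp add: d_def)
  have s: "geval u x (tmultiple N D (N - 2)) = min (nmul (N - 1) d) u"
    using geval_tmultiple N2 by (simp add: d_def Suc_diff_Suc numeral_2_eq_2)
  define T where "T = geval u x (Mul D (tmultiple N D (N - 2)))"
  have fT: "1 \<le> fst T"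
  proof (cases "nmul (N - 1) d \<le> u")
    case True
    have "int N * 1 \<le> int N * fst d" using fd by (intro mult_left_mono) (simp_all add: d_def)
    then have f1: "1 \<le> fst (nmul N d - u)" using fu by simp
    then have "0 < nmul N d - u" by (intro less_if_fst_less) simp
    moreover have "d + nmul (N - 1) d = nmul N d" using N2 nmul_Suc[of "N - 1" d] by simp
    ultimately have "T = nmul N d - u" using s True by (simp add: T_def gmult_def d_def)
    then show ?thesis using f1 by simp
  next
    case False
    then have "T = d" using s d by (simp add: T_def gmult_def d_def)
    then show ?thesis using fd d_def by simp
  qed
  have "int N * 1 \<le> int N * fst T" using fT by (intro mult_left_mono) simp_all
  then have "u < nmul N T" using fu by (intro less_if_fst_less) simp
  then have "geval u x (tmultiple N (Mul D (tmultiple N D (N - 2))) (N - 1)) = u"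
    using geval_tmultiple N2 by (simp add: T_def Suc_diff_Suc)
  then show ?thesis by (simp add: tis_infinitesimal_def geval_tneg)
qed

lemma geval_tguard_if_fst_zero:
  assumes "1 \<le> fst u" "2 \<le> N" "fst (geval u x D) = 0"
  shows "geval u x (tguard N D Q) = geval u x Q"
  using geval_tis_infinitesimal_if_fst_zero[OF assms] geval_tpow_tshift geval_bounds[of Q]
  by (simp add: tguard_def gimp_def)

lemma geval_tguard_if_fst_pos:
  assumes "fst u < int N" "1 \<le> fst (geval u x D)"
  shows "geval u x (tguard N D Q) = u"
  using geval_tis_infinitesimal_if_fst_pos[OF assms] geval_tpow_tshift geval_bounds[of Q]
  by (simp add: tguard_def gimp_def)

lemma geval_tmult_test:
  "2 \<le> j \<Longrightarrow> geval u x (tmult_test N j) =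
     min (max (u - nmul j x) 0 + gmult u x (min (nmul (j - 1) x) u)) u"
  unfolding tmult_test_def using geval_tplus geval_tmultiple geval_tpow_tneg_Var
  by (simp add: Suc_diff_Suc numeral_2_eq_2)

lemma geval_tpart: "geval u x (tpart N j) = min x (max (u - nmul (j - 1) x) 0)"
  unfolding tpart_def using geval_tmin geval_tpow_tneg_Var by simp

text \<open>Away from \<open>j x = u\<close> in the first coordinate, one of the two summands of
  \<open>tmult_test\<close> has positive first coordinate.\<close>

lemma fst_geval_tmult_test_pos:
  assumes j: "2 \<le> j" and fu: "1 \<le> fst u" and ne: "int j * fst x \<noteq> fst u"
  shows "1 \<le> fst (geval u x (tmult_test N j))"
proof -
  define W where "W = max (u - nmul j x) 0"
  define V where "V = gmult u x (min (nmul (j - 1) x) u)"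
  have W0: "0 \<le> W" by (simp add: W_def)
  have V0: "0 \<le> V" by (simp add: V_def gmult_def)
  have key: "1 \<le> fst (W + V)"
  proof (cases "int j * fst x < fst u")
    case True
    then have "0 < u - nmul j x" by (intro less_if_fst_less) simp
    then have "W = u - nmul j x" by (simp add: W_def)
    then show ?thesis using True fst_nonneg[OF V0] by simp
  next
    case False
    then have gt: "fst u < int j * fst x" using ne by simp
    have "1 \<le> fst V"
    proof (cases "nmul (j - 1) x \<le> u")
      case True
      have "0 < nmul j x - u" using gt by (intro less_if_fst_less) simp
      moreover have "x + nmul (j - 1) x = nmul j x" using j nmul_Suc[of "j - 1" x] by simp
      ultimately have "V = nmul j x - u" using True by (simp add: V_def gmult_def)
      then show ?thesis using gt by simp
    next
      case False
      then have "V = x" using x0 by (simp add: V_def gmult_def)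
      have "fst u \<le> int (j - 1) * fst x" using False by (auto simp: lex_le_iff)
      then have "1 \<le> fst x" using fu j by (smt (verit) mult_nonneg_nonpos of_nat_0_le_iff)
      then show ?thesis using \<open>V = x\<close> by simp
    qed
    then show ?thesis using fst_nonneg[OF W0] by simp
  qed
  have "geval u x (tmult_test N j) = min (W + V) u" using geval_tmult_test[OF j] by (simp add: W_def V_def)
  then show ?thesis using key fu by (simp add: min_def)
qed

end

text \<open>In \<open>\<L>\<^sub>1\<^sub>,\<^sub>0\<close> the element \<open>(1, -1)\<close> generates only elements \<open>(1, -m)\<close>, and \<open>tshift N\<close> is
  \<open>(1, -1)\<close> itself; so the large power of \<open>tshift N\<close> in \<open>tguard\<close> forces the value \<open>1\<close>.\<close>

lemma geval_Luk_1_0_coinfinitesimal: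
  "\<exists>m. geval (1,0) (1,-1) t = (1, - int m) \<and> m \<le> neg_depth t"
proof (induction t)
  case Var then show ?case by (intro exI[of _ 1]) simp
next
  case One then show ?case by (intro exI[of _ 0]) simp
next
  case (Mul s t)
  then obtain a b where "geval (1,0) (1,-1) s = (1, - int a)" "a \<le> neg_depth s"
    and "geval (1,0) (1,-1) t = (1, - int b)" "b \<le> neg_depth t" by blast
  then show ?case by (intro exI[of _ "a + b"]) (simp add: gmult_def max_def lex_le_iff)
next
  case (Imp s t)
  then obtain a b where "geval (1,0) (1,-1) s = (1, - int a)" "a \<le> neg_depth s"
    and "geval (1,0) (1,-1) t = (1, - int b)" "b \<le> neg_depth t" by blast
  moreover have "b - a \<le> neg_depth t" using \<open>b \<le> neg_depth t\<close> by simp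
  ultimately show ?case by (intro exI[of _ "b - a"]) (simp add: gimp_def min_def lex_le_iff)
qed

lemma geval_Luk_1_0_tguard: "geval (1,0) (1,-1) (tguard N D Q) = (1,0)"
proof -
  obtain m where m: "geval (1,0) (1,-1) (Imp (tis_infinitesimal N D) Q) = (1, - int m)"
    "m \<le> neg_depth (Imp (tis_infinitesimal N D) Q)"
    using geval_Luk_1_0_coinfinitesimal by blast
  have "geval (1,0) (1,-1) (tpow Var n) = (1, - int n)" for n
    by (induction n) (simp_all add: gmult_def max_def lex_le_iff)
  then have "geval (1,0) (1,-1) (tshift N) = (1, -1)"
    by (simp add: tshift_def tzero_def gmult_def gimp_def max_def min_def lex_le_iff)
  then have "geval (1,0) (1,-1) (tpow (tshift N) n) = (1, - int n)" for n
    by (induction n) (simp_all add: gmult_def max_def lex_le_iff)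
  then show ?thesis unfolding tguard_def using m by (simp add: gimp_def min_def lex_le_iff)
qed

section \<open>Evaluating the guard on the factors of \<open>A_Delta\<close>\<close>

lemma geval_tguard_tpart:
  assumes x: "0 \<le> x" "x \<le> u" and fu: "1 \<le> fst u" "fst u < int N" and fx: "1 \<le> fst (u - x)"
    and j: "2 \<le> j"
    and D: "fst (min (max (u - nmul j x) 0 + gmult u x (min (nmul (j - 1) x) u)) u) = 0"
    and Q: "min x (max (u - nmul (j - 1) x) 0) = q"
  shows "geval u x (tguard N (tmult_test N j) (tpart N j)) = q"
proof -
  have zero: "geval u x (tzero N) = 0" by (rule geval_tzero[OF x fu(2) fx])
  have "fst (geval u x (tmult_test N j)) = 0" using geval_tmult_test[OF x zero j] D by simp
  then show ?thesis
    using geval_tguard_if_fst_zero[OF x zero fu(1)] geval_tpart[OF x zero] Q fu by simp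
qed

lemma geval_tguard_unit:
  assumes x: "0 \<le> x" "x \<le> u" and fu: "1 \<le> fst u" "fst u < int N" and fx: "1 \<le> fst (u - x)"
    and j: "2 \<le> j" and ne: "int j * fst x \<noteq> fst u"
  shows "geval u x (tguard N (tmult_test N j) Q) = u"
proof -
  have zero: "geval u x (tzero N) = 0" by (rule geval_tzero[OF x fu(2) fx])
  show ?thesis
    by (rule geval_tguard_if_fst_pos[OF x zero fu(2) fst_geval_tmult_test_pos[OF x zero j fu(1) ne]])
qed

text \<open>The factors on which the embedding of \<open>\<L>\<^sub>j\<^sub>,\<^sub>1\<close>, \<open>j \<ge> 2\<close>, is not constant: there
  \<open>g\<^sub>\<Delta>\<close> is \<open>(1, 0)\<close>, \<open>(1, 1)\<close> or \<open>(1, 0)\<close> in \<open>\<L>\<^sub>j\<^sub>,\<^sub>1\<close>, \<open>\<L>\<^sub>j\<^sub>,\<^sub>j\<^sub>-\<^sub>1\<close>, \<open>\<L>\<^sub>j\<close>, and \<open>\<not>g\<^sub>2\<^sub>,\<^sub>1 = (1, 1)\<close>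
  in \<open>\<L>\<^sub>2\<^sub>,\<^sub>1\<close>.\<close>

definition special_comps :: "nat \<Rightarrow> (nat \<times> nat \<times> nat) set" where
  "special_comps j = {(j, 1, 0), (j, j - 1, 0), (j, 1, 2)} \<union> (if j = 2 then {(2, 1, 1)} else {})"

lemma geval_tguard_special_comp:
  assumes j: "2 \<le> j" "int j < int N" and d: "d \<in> special_comps j"
  shows "geval (comp_unit d) (gbar d) (tguard N (tmult_test N j) (tpart N j)) = (1, 0)"
proof -
  consider "d = (j, 1, 0)" | "d = (j, j - 1, 0)" "3 \<le> j" | "d = (j, 1, 2)" | "j = 2" "d = (2, 1, 1)"
    using d j by (auto simp: special_comps_def split: if_splits)
  then show ?thesis
  proof cases
    case 1
    have "gen_el j 1 = (1, 0)"
      using j by (intro gen_el_eqI) (auto simp: half_unimodular_def lex_le_iff det_def)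
    then show ?thesis using 1 j
      by (simp add: gbar_simps, intro geval_tguard_tpart)
        (auto simp: nmul_def lex_le_iff gmult_def max_def min_def)
  next
    case 2
    have "coprime j (j - 1)" using j by (intro coprime_diff_one_right_nat) simp
    then have "gen_el j (j - 1) = (1, 1)"
      using 2 by (intro gen_el_eqI) (auto simp: half_unimodular_def lex_le_iff det_def)
    then show ?thesis using 2 j
      by (simp add: gbar_simps, intro geval_tguard_tpart)
        (auto simp: nmul_def lex_le_iff gmult_def max_def min_def)
  next
    case 3
    then show ?thesis using j
      by (simp add: gbar_simps, intro geval_tguard_tpart)
        (auto simp: nmul_def lex_le_iff gmult_def max_def min_def)
  next
    case 4
    have "gen_el 2 1 = (1, 0)" by (intro gen_el_eqI) (auto simp: half_unimodular_def lex_le_iff det_def)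
    then have "gbar d = (1, 1)" using 4 by (simp add: gbar_simps lneg_eq_gimp gimp_def min_def lex_le_iff)
    then show ?thesis using 4 j
      by simp (intro geval_tguard_tpart; auto simp: nmul_def lex_le_iff gmult_def max_def min_def)
  qed
qed

lemma unit_factor_pos:
  assumes r: "1 \<le> (r::int)" and d: "r * m = 1 \<or> r * m = -1"
  shows "r = 1 \<and> (m = 1 \<or> m = -1)"
proof (cases "r * m = 1")
  case True then show ?thesis using r pos_zmult_eq_1_iff[of r m] by simp
next
  case False
  then have "r * (-m) = 1" using d by simp
  then show ?thesis using r pos_zmult_eq_1_iff[of r "-m"] by simp
qed

lemma half_unimodular_mult_fst_eq:
  assumes j: "2 \<le> j" and k: "2 \<le> k" and hk: "h < k" and a: "half_unimodular (int k, int h) (r, s)"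
    and e: "int j * r = int k"
  shows "k = j \<and> (h = 1 \<or> h = j - 1)"
proof -
  have "r * int h - s * int k = 1 \<or> r * int h - s * int k = -1"
    using a by (auto simp: half_unimodular_def det_def)
  then have "r * (int h - s * int j) = 1 \<or> r * (int h - s * int j) = -1"
    by (simp add: algebra_simps flip: e)
  then have r: "r = 1" and hs: "int h - s * int j = 1 \<or> int h - s * int j = -1"
    using unit_factor_pos half_unimodular_fst[OF k a] by blast+
  have kj: "k = j" using e r by simp
  have "s = 0 \<or> s = 1"
  proof -
    have "s \<le> -1 \<Longrightarrow> s * int j \<le> - int j" using mult_right_mono[of s "-1" "int j"] by simp
    moreover have "2 \<le> s \<Longrightarrow> 2 * int j \<le> s * int j" using mult_right_mono[of 2 s "int j"] by simp
    ultimately show ?thesis using hs hk kj j by linarith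
  qed
  then show ?thesis using hs hk kj j by auto
qed

lemma half_unimodular_mult_fst_compl_eq:
  assumes j: "2 \<le> j" and k: "2 \<le> k" and hk: "h < k" and cop: "coprime k h"
    and a: "half_unimodular (int k, int h) (r, s)" and e: "int j * (int k - r) = int k"
  shows "k = 2 \<and> j = 2 \<and> h = 1"
proof -
  define m where "m = int k - r"
  have "r * int h - s * int k = 1 \<or> r * int h - s * int k = -1"
    using a by (auto simp: half_unimodular_def det_def)
  moreover have "r * int h - s * int k = - (m * int h - (int h - s) * int k)"
    by (simp add: m_def algebra_simps)
  moreover have "m * int h - (int h - s) * int k = m * (int h - (int h - s) * int j)"
    using e by (simp add: m_def algebra_simps)
  ultimately have "m * (int h - (int h - s) * int j) = 1 \<or> m * (int h - (int h - s) * int j) = -1"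
    by linarith
  moreover have "1 \<le> m" using half_unimodular_fst[OF k a] by (simp add: m_def)
  ultimately have "m = 1" using unit_factor_pos by blast
  then have "k = j" "int k - r = 1" using e by (simp_all add: m_def)
  moreover have "h \<noteq> 0" using cop k by (intro notI) simp
  ultimately show ?thesis using half_unimodular_fst[OF k a] hk j by auto
qed

lemma gbar_Luk_1_0: "gbar (1, 0, Suc 0) = (1, -1)"
  by (simp add: gbar_simps gen_el_1 lneg_eq_gimp gimp_def min_def lex_le_iff)

lemma geval_tguard_gen_el_comp:
  assumes j: "2 \<le> j" and k: "2 \<le> k" and hk: "h < k" and cop: "coprime k h" and i: "i \<le> 1"
    and kN: "int k < int N" and nd: "(k, h, i) \<notin> special_comps j"
  shows "geval (comp_unit (k, h, i)) (gbar (k, h, i)) (tguard N (tmult_test N j) (tpart N j))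
    = comp_unit (k, h, i)"
proof -
  obtain r s where rs: "gen_el k h = (r, s)" by fastforce
  have a: "half_unimodular (int k, int h) (r, s)" using gen_el_half_unimodular[OF k cop] rs by simp
  note bounds = half_unimodular_bounds[OF a] and fst_bounds = half_unimodular_fst[OF k a]
  consider "i = 0" | "i = 1" using i by linarith
  then show ?thesis
  proof cases
    case 1
    have "int j * r \<noteq> int k"
      using half_unimodular_mult_fst_eq[OF j k hk a] nd 1 by (auto simp: special_comps_def)
    then show ?thesis using 1 rs kN j bounds fst_bounds
      by (simp add: gbar_simps, intro geval_tguard_unit) auto
  next
    case 2
    have "int j * (int k - r) \<noteq> int k"
      using half_unimodular_mult_fst_compl_eq[OF j k hk cop a] nd 2 by (auto simp: special_comps_def)
    moreover have "gbar (k, h, i) = (int k, int h) - (r, s)"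
      using 2 rs bounds by (simp add: gbar_simps lneg_eq_gimp gimp_zero)
    moreover have "0 \<le> u - x \<and> u - x \<le> u" if "0 \<le> x" "x \<le> u" for x u :: elt
      using that by simp
    then have "0 \<le> (int k, int h) - (r, s)" "(int k, int h) - (r, s) \<le> (int k, int h)"
      using bounds by blast+
    ultimately show ?thesis using 2 kN j fst_bounds
      by simp (intro geval_tguard_unit; simp)
  qed
qed

lemma geval_tguard_other_comp:
  assumes j: "2 \<le> j" and hk: "h < k" and cop: "coprime k h" and i: "i \<le> 2" and kN: "int k < int N"
    and nd: "(k, h, i) \<notin> special_comps j"
  shows "geval (comp_unit (k, h, i)) (gbar (k, h, i)) (tguard N (tmult_test N j) (tpart N j))
    = comp_unit (k, h, i)"
proof -
  consider "i = 2" | "i = 0" "k = 1" | "i = 1" "k = 1" | "i \<le> 1" "2 \<le> k"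
    using i hk by linarith
  then show ?thesis
  proof cases
    case 1
    have "j * h \<noteq> k"
    proof
      assume "j * h = k"
      then have "h dvd gcd k h" by (metis dvd_triv_right gcd_greatest dvd_refl)
      then have "h = 1" using cop by simp
      then show False using nd \<open>j * h = k\<close> 1 by (simp add: special_comps_def)
    qed
    then have "int j * int h \<noteq> int k" by (metis of_nat_eq_iff of_nat_mult)
    then show ?thesis using 1 hk kN j
      by (simp add: gbar_simps, intro geval_tguard_unit) (auto simp: lex_le_iff)
  next
    case 2
    then show ?thesis using hk kN j
      by (simp add: gbar_simps gen_el_1, intro geval_tguard_unit) (auto simp: lex_le_iff)
  next
    case 3
    then show ?thesis using hk gbar_Luk_1_0 geval_Luk_1_0_tguard by simp
  next
    case 4
    then show ?thesis using geval_tguard_gen_el_comp[OF j 4(2) hk cop 4(1) kN nd] by simp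
  qed
qed

lemma geval_tguard_Var_comp:
  assumes hk: "h < k" and cop: "coprime k h" and kN: "int k < int N" and N2: "2 \<le> N"
    and i: "i = 2 \<or> k = 1 \<and> i \<le> 1"
  shows "geval (comp_unit (k, h, i)) (gbar (k, h, i)) (tguard N Var Var) =
    (if (k, h, i) = (1, 0, 0) then (0, 1) else if (k, h, i) = (1, 0, 2) then 0 else comp_unit (k, h, i))"
proof -
  have zero: "geval (int k, b) x (tzero N) = 0" if "0 \<le> x" "x \<le> (int k, b)" "1 \<le> fst ((int k, b) - x)" for x b
    using geval_tzero that kN by simp
  consider "i = 0" "k = 1" | "i = 1" "k = 1" | "i = 2" "h = 0" | "i = 2" "1 \<le> h"
    using i by linarith
  then show ?thesis
  proof cases
    case 1
    then show ?thesis using hk geval_tguard_if_fst_zero[OF _ _ zero, of "(0, 1)" 0 Var Var] N2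
      by (simp add: gbar_simps gen_el_1 lex_le_iff)
  next
    case 2
    then show ?thesis using hk gbar_Luk_1_0 geval_Luk_1_0_tguard by simp
  next
    case 3
    then have "k = 1" using cop by simp
    then show ?thesis using 3 geval_tguard_if_fst_zero[OF _ _ zero, of 0 0 Var Var] N2
      by (simp add: gbar_simps lex_le_iff zero_prod_def)
  next
    case 4
    then show ?thesis using hk kN geval_tguard_if_fst_pos[OF _ _ zero, of "(int h, 0)" 0 Var Var]
      by (simp add: gbar_simps lex_le_iff)
  qed
qed

lemma Delta_cases:
  assumes "d \<in> Delta I J"
  obtains k h i where "d = (k, h, i)" "h < k" "coprime k h"
    "i = 2 \<and> k \<in> divisors_of I \<or> i \<le> 1 \<and> k \<in> divisors_of J"
  using assms unfolding Delta_def by fastforce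

lemma Delta_memI:
  "k \<in> divisors_of J \<Longrightarrow> h < k \<Longrightarrow> coprime k h \<Longrightarrow> i \<le> 1 \<Longrightarrow> (k, h, i) \<in> Delta I J"
  unfolding Delta_def by (cases i) auto

lemma Delta_fst_le_Max:
  assumes "finite I" "finite J" "0 \<notin> I" "0 \<notin> J" "(k, h, i) \<in> Delta I J"
  shows "k \<le> Max (I \<union> J)"
proof -
  obtain m where m: "m \<in> I \<union> J" "k dvd m"
    using assms(5) by (auto simp: Delta_def divisors_of_def)
  moreover have "m \<noteq> 0"
  proof
    assume "m = 0"
    then show False using m(1) assms(3,4) by simp
  qed
  ultimately have "k \<le> m" by (simp add: dvd_imp_le)
  also have "m \<le> Max (I \<union> J)" using m assms(1,2) by simp
  finally show ?thesis .
qed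

lemma reduced_divisors_of_J:
  assumes "reduced I J" "1 \<in> J"
  shows "divisors_of J = {1}"
proof -
  have "J = {1}" using assms by (auto simp: reduced_def)
  then show ?thesis by (auto simp: divisors_of_def)
qed

lemma embeddable_Luk_pair_1:
  assumes fin: "finite I" "finite J" and nz: "0 \<notin> I" "0 \<notin> J"
    and red: "reduced I J" and J: "1 \<in> J"
  shows "embeddable_into (Luk_pair 1 1) (A_Delta I J) (B_Delta I J)"
proof -
  define N where "N = Suc (Max (I \<union> J))"
  define c where "c d = (if d = (1, 0, 0) then 1 else 0 :: int)" for d :: "nat \<times> nat \<times> nat"
  define e where "e d = (if d = (1, 0, 0) then -1 else 0 :: int)" for d :: "nat \<times> nat \<times> nat"
  have N2: "2 \<le> N" using J fin Max_ge[of "I \<union> J" 1] by (simp add: N_def)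
  have g: "half_unimodular (1, 1) (0, 1)" by (simp add: half_unimodular_def lex_le_iff det_def)
  have "(1, 0, 0) \<in> Delta I J" using J by (intro Delta_memI) (auto simp: divisors_of_def)
  moreover have "geval (comp_unit d) (gbar d) (tguard N Var Var)
      = (if d \<in> {(1, 0, 0), (1, 0, 2)} then lin (c d) (e d) (0, 1) else comp_unit d)"
    if "d \<in> Delta I J" for d
  proof -
    obtain k h i where d: "d = (k, h, i)" "h < k" "coprime k h"
      and ki: "i = 2 \<and> k \<in> divisors_of I \<or> i \<le> 1 \<and> k \<in> divisors_of J"
      using \<open>d \<in> Delta I J\<close> by (rule Delta_cases)
    have "k \<le> Max (I \<union> J)" using Delta_fst_le_Max[OF fin nz] that d by simp
    then have "int k < int N" by (simp add: N_def)
    moreover have "i = 2 \<or> k = 1 \<and> i \<le> 1" using ki reduced_divisors_of_J[OF red J] by auto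
    ultimately show ?thesis
      using geval_tguard_Var_comp[OF d(2,3) _ N2] d by (auto simp: c_def e_def lin_def zero_prod_def)
  qed
  ultimately show ?thesis
    unfolding Luk_pair_eq_Gamma_alg
    using gen_half_unimodular[OF _ g] half_unimodular_bounds[OF g]
    by (intro embeddable_via_term[where S = "{(1, 0, 0), (1, 0, 2)}" and c = c and e = e
        and d_inj = "(1, 0, 0)" and t = "tguard N Var Var"])
      (auto simp: c_def e_def lin_def lex_le_iff)
qed

lemma embeddable_Luk_pair_ge_2:
  assumes fin: "finite I" "finite J" and nz: "0 \<notin> I" "0 \<notin> J"
    and J: "j \<in> J" and j: "2 \<le> j"
  shows "embeddable_into (Luk_pair j 1) (A_Delta I J) (B_Delta I J)"
proof -
  define N where "N = Suc (Max (I \<union> J))"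
  define c where "c d = (if snd (snd d) = 2 then 0 else int (fst (snd d)))" for d :: "nat \<times> nat \<times> nat"
  have "j \<le> Max (I \<union> J)" using J fin by simp
  then have jN: "int j < int N" by (simp add: N_def)
  have g: "half_unimodular (int j, 1) (1, 0)"
    using j by (auto simp: half_unimodular_def lex_le_iff det_def)
  have "j \<in> divisors_of J" unfolding divisors_of_def using J dvd_refl by blast
  then have "(j, 1, 0) \<in> Delta I J" using j by (intro Delta_memI) auto
  moreover have "lin (c d) 0 (int j, 1) = comp_unit d" if "d \<in> special_comps j" for d
    using that j by (auto simp: special_comps_def c_def lin_def split: if_splits)
  moreover have "geval (comp_unit d) (gbar d) (tguard N (tmult_test N j) (tpart N j))
      = (if d \<in> special_comps j then lin (c d) 0 (1, 0) else comp_unit d)"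
    if "d \<in> Delta I J" for d
  proof -
    obtain k h i where d: "d = (k, h, i)" "h < k" "coprime k h" "i \<le> 2"
      using \<open>d \<in> Delta I J\<close> by (rule Delta_cases) auto
    have "k \<le> Max (I \<union> J)" using Delta_fst_le_Max[OF fin nz] that d by simp
    then have "int k < int N" by (simp add: N_def)
    then show ?thesis
      using geval_tguard_special_comp[OF j jN] geval_tguard_other_comp[OF j d(2-4)] d
      by (auto simp: lin_def)
  qed
  moreover have "(j, 1, 0) \<in> special_comps j" "c (j, 1, 0) \<noteq> 0"
    by (simp_all add: special_comps_def c_def)
  moreover have "0 \<le> c d" for d by (simp add: c_def)
  moreover have "(1, 0) \<le> (int j, 1)" using j by (simp add: lex_le_iff)
  ultimately show ?thesis
    unfolding Luk_pair_eq_Gamma_alg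
    using gen_half_unimodular[OF _ g] half_unimodular_bounds[OF g]
    by (intro embeddable_via_term[where S = "special_comps j" and c = c and e = "\<lambda>_. 0"
        and d_inj = "(j, 1, 0)" and t = "tguard N (tmult_test N j) (tpart N j)"]) simp_all
qed

theorem lemma4p10:
  fixes I J :: "nat set" and j :: nat
  assumes "finite I" and "finite J" and "0 \<notin> I" and "0 \<notin> J"
    and "reduced I J"
    and "j \<in> J"
  shows "embeddable_into (Luk_pair j 1) (A_Delta I J) (B_Delta I J)"
proof (cases "j = 1")
  case True
  then show ?thesis using embeddable_Luk_pair_1 assms by simp
next
  case False
  then have "2 \<le> j" using assms(4,6) by (cases j) auto
  then show ?thesis using embeddable_Luk_pair_ge_2 assms by simp
qed

end
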